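(* Let $(X,\phi)$ be a flow on a compact metric space $(X,d)$. Then \begin{align*} \overline{\mathrm{mdim}}_M(\phi,X,d)&=\limsup_{\epsilon\to0}\liminf_{t\to\infty}\frac{\log r_t(\phi,X,d,\epsilon)}{t\log\frac1\epsilon},\\ \underline{\mathrm{mdim}}_M(\phi,X,d)&=\liminf_{\epsilon\to0}\liminf_{t\to\infty}\frac{\log r_t(\phi,X,d,\epsilon)}{t\log\frac1\epsilon}. \end{align*}
   Context: A flow: $\phi:X\times\mathbb{R}\to X$ continuous, $\phi_t(x)=\phi(x,t)$, $\phi_0=\mathrm{id}$, $\phi_{t+s}=\phi_t\circ\phi_s$. $d_t(x,y)=\max_{s\in[0,t]}d(\phi_sx,\phi_sy)$. $r_t(\phi,X,d,\epsilon)$ is the minimal cardinality of $E\subset X$ such that every $x\in X$ has $y\in E$ with $d_t(x,y)<\epsilon$; $r(\phi,X,d,\epsilon)=\limsup_{t\to\infty}\frac1t\log r_t(\phi,X,d,\epsilon)$; $\overline{\mathrm{mdim}}_M(\phi,X,d)=\limsup_{\epsilon\to0}\frac{r(\phi,X,d,\epsilon)}{\log(1/\epsilon)}$, $\underline{\mathrm{mdim}}_M(\phi,X,d)=\liminf_{\epsilon\to0}\frac{r(\phi,X,d,\epsilon)}{\log(1/\epsilon)}$. *)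

theory Defs
  imports "HOL-Analysis.Analysis" "HOL-Library.Liminf_Limsup" "HOL-Library.Extended_Real"
begin

definition is_flow :: "'a::metric_space set \<Rightarrow> ('a \<Rightarrow> real \<Rightarrow> 'a) \<Rightarrow> bool" where
  "is_flow X phi \<longleftrightarrow>
     continuous_on (X \<times> UNIV) (\<lambda>(x, t). phi x t) \<and>
     (\<forall>x\<in>X. \<forall>t. phi x t \<in> X) \<and>
     (\<forall>x\<in>X. phi x 0 = x) \<and>
     (\<forall>x\<in>X. \<forall>t s. phi x (t + s) = phi (phi x s) t)"

definition bowen_dist :: "('a::metric_space \<Rightarrow> real \<Rightarrow> 'a) \<Rightarrow> real \<Rightarrow> 'a \<Rightarrow> 'a \<Rightarrow> real" where
  "bowen_dist phi t x y = (SUP s\<in>{0..t}. dist (phi x s) (phi y s))"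

definition span_num :: "'a::metric_space set \<Rightarrow> ('a \<Rightarrow> real \<Rightarrow> 'a) \<Rightarrow> real \<Rightarrow> real \<Rightarrow> nat" where
  "span_num X phi t eps =
     Inf {card E | E. finite E \<and> E \<subseteq> X \<and> (\<forall>x\<in>X. \<exists>y\<in>E. bowen_dist phi t x y < eps)}"

definition span_rate :: "'a::metric_space set \<Rightarrow> ('a \<Rightarrow> real \<Rightarrow> 'a) \<Rightarrow> real \<Rightarrow> ereal" where
  "span_rate X phi eps = Limsup at_top (\<lambda>t. ereal (ln (real (span_num X phi t eps)) / t))"

definition upper_mdim_M :: "'a::metric_space set \<Rightarrow> ('a \<Rightarrow> real \<Rightarrow> 'a) \<Rightarrow> ereal" where
  "upper_mdim_M X phi = Limsup (at_right 0) (\<lambda>eps. span_rate X phi eps / ereal (ln (1 / eps)))"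

definition lower_mdim_M :: "'a::metric_space set \<Rightarrow> ('a \<Rightarrow> real \<Rightarrow> 'a) \<Rightarrow> ereal" where
  "lower_mdim_M X phi = Liminf (at_right 0) (\<lambda>eps. span_rate X phi eps / ereal (ln (1 / eps)))"

end

theory Submission
  imports Defs "HOL-Real_Asymp.Real_Asymp"
begin

(* Let N_t(e) be the least number of sets of Bowen diameter at most e covering X.  Refining a
   cover for time t by the preimage under the time-t map of a cover for time s gives
   N_(t+s)(e) <= N_t(e) N_s(e), and r_t(e) <= N_t(e/2) <= r_t(e/4).  Hence
   ln r_t(e) / t <= (1/T + 1/t) ln r_T(e/4) for all T, t > 0, so the limsup in t of ln r_t(e) / t
   is at most the liminf in T of ln r_T(e/4) / T.  Replacing e by e/4 does not affect the limits
   of the normalised rates, because ln(1/e) / ln(1/(4e)) tends to 1 as e tends to 0. *)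

lemma ereal_le_if_le_mult_all_gt_1:
  fixes x y :: ereal
  assumes "0 \<le> y" and "\<And>z::real. 1 < z \<Longrightarrow> x \<le> y * ereal z"
  shows "x \<le> y"
proof (rule ereal_le_mult_one_interval)
  show "y \<noteq> -\<infinity>" using assms(1) by auto
  fix z :: ereal assume z: "0 < z" "z < 1"
  then obtain r where r: "z = ereal r" "0 < r" "r < 1" by (cases z) auto
  have "z * x \<le> ereal r * (y * ereal (1 / r))"
    unfolding r(1) using assms(2)[of "1 / r"] r by (intro ereal_mult_left_mono) auto
  also have "\<dots> = y" using r by (simp add: mult.commute[of "ereal r"] mult.assoc)
  finally show "z * x \<le> y" .
qed

lemma Limsup_mult_tendsto_1_le:
  fixes v :: "'b \<Rightarrow> ereal" and c :: "'b \<Rightarrow> real"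
  assumes "F \<noteq> bot" and "eventually (\<lambda>x. 0 \<le> v x) F" and "(c \<longlongrightarrow> 1) F"
  shows "Limsup F (\<lambda>x. v x * ereal (c x)) \<le> Limsup F v"
proof (rule ereal_le_if_le_mult_all_gt_1)
  show "0 \<le> Limsup F v"
    using Liminf_le_Limsup[OF assms(1)] Liminf_bounded[OF assms(2)] by (rule order_trans[rotated])
  fix z :: real assume "1 < z"
  then have "eventually (\<lambda>x. 0 \<le> v x \<and> c x < z) F"
    using assms(2) order_tendstoD(2)[OF assms(3)] by (intro eventually_conj)
  then have "eventually (\<lambda>x. v x * ereal (c x) \<le> v x * ereal z) F"
    by (rule eventually_mono) (auto intro: ereal_mult_left_mono)
  then have "Limsup F (\<lambda>x. v x * ereal (c x)) \<le> Limsup F (\<lambda>x. v x * ereal z)"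
    by (rule Limsup_mono)
  also have "\<dots> = Limsup F v * ereal z" using \<open>1 < z\<close> by (intro Limsup_ereal_mult_right assms(1)) simp
  finally show "Limsup F (\<lambda>x. v x * ereal (c x)) \<le> Limsup F v * ereal z" .
qed

lemma Liminf_mult_tendsto_1_le:
  fixes v :: "'b \<Rightarrow> ereal" and c :: "'b \<Rightarrow> real"
  assumes "F \<noteq> bot" and "eventually (\<lambda>x. 0 \<le> v x) F" and "(c \<longlongrightarrow> 1) F"
  shows "Liminf F (\<lambda>x. v x * ereal (c x)) \<le> Liminf F v"
proof (rule ereal_le_if_le_mult_all_gt_1)
  show "0 \<le> Liminf F v" using Liminf_bounded[OF assms(2)] .
  fix z :: real assume "1 < z"
  then have "eventually (\<lambda>x. 0 \<le> v x \<and> c x < z) F"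
    using assms(2) order_tendstoD(2)[OF assms(3)] by (intro eventually_conj)
  then have "eventually (\<lambda>x. v x * ereal (c x) \<le> v x * ereal z) F"
    by (rule eventually_mono) (auto intro: ereal_mult_left_mono)
  then have "Liminf F (\<lambda>x. v x * ereal (c x)) \<le> Liminf F (\<lambda>x. v x * ereal z)"
    by (rule Liminf_mono)
  also have "\<dots> = Liminf F v * ereal z" using \<open>1 < z\<close> by (intro Liminf_ereal_mult_right assms(1)) simp
  finally show "Liminf F (\<lambda>x. v x * ereal (c x)) \<le> Liminf F v * ereal z" .
qed

lemma Limsup_at_right_0_rescale:
  fixes f :: "real \<Rightarrow> 'b::complete_lattice" and k :: real
  assumes "0 < k"
  shows "Limsup (at_right 0) (\<lambda>x. f (k * x)) = Limsup (at_right 0) f"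
  using Limsup_filtermap_eq[of "times k" "at_right 0" f] filtermap_times_pos_at_right[OF assms, of 0] assms
  by (simp add: inj_def)

lemma Liminf_at_right_0_rescale:
  fixes f :: "real \<Rightarrow> 'b::complete_lattice" and k :: real
  assumes "0 < k"
  shows "Liminf (at_right 0) (\<lambda>x. f (k * x)) = Liminf (at_right 0) f"
  using Liminf_filtermap_eq[of "times k" "at_right 0" f] filtermap_times_pos_at_right[OF assms, of 0] assms
  by (simp add: inj_def)

lemma ereal_divide_eq_mult_ratio:
  fixes x :: ereal
  assumes "0 < a" "0 < b"
  shows "x / ereal b = x / ereal a * ereal (a / b)"
  using assms by (cases x) (auto simp: field_simps)

lemma Limsup_Liminf_div_ln_eq_if_rescaled_le:
  fixes f g :: "real \<Rightarrow> ereal" and k :: real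
  assumes "0 < k"
    and g_le_f: "\<And>e. 0 < e \<Longrightarrow> g e \<le> f e"
    and f_le_g: "\<And>e. 0 < e \<Longrightarrow> f (k * e) \<le> g e"
    and g_nonneg: "\<And>e. 0 \<le> g e"
  shows "Limsup (at_right 0) (\<lambda>e. f e / ereal (ln (1 / e))) =
           Limsup (at_right 0) (\<lambda>e. g e / ereal (ln (1 / e))) \<and>
         Liminf (at_right 0) (\<lambda>e. f e / ereal (ln (1 / e))) =
           Liminf (at_right 0) (\<lambda>e. g e / ereal (ln (1 / e)))"
proof -
  define A where "A e = f e / ereal (ln (1 / e))" for e
  define B where "B e = g e / ereal (ln (1 / e))" for e
  define c where "c e = ln (1 / e) / ln (1 / (k * e))" for e
  have small: "eventually (\<lambda>e. 0 < e \<and> e < 1 \<and> k * e < 1) (at_right (0::real))"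
    unfolding eventually_at_right_field using \<open>0 < k\<close>
    by (intro exI[of _ "min 1 (1 / k)"]) (auto simp: field_simps)
  have B_le_A: "eventually (\<lambda>e. B e \<le> A e) (at_right 0)"
    using small by eventually_elim (simp add: A_def B_def g_le_f)
  have A_le_B: "eventually (\<lambda>e. A (k * e) \<le> B e * ereal (c e)) (at_right 0)"
    using small
  proof eventually_elim
    case (elim e)
    then have "A (k * e) \<le> g e / ereal (ln (1 / (k * e)))"
      using \<open>0 < k\<close> by (simp add: A_def f_le_g)
    also have "\<dots> = B e * ereal (c e)"
      unfolding B_def c_def using elim \<open>0 < k\<close> by (intro ereal_divide_eq_mult_ratio) simp_all
    finally show ?case .
  qed
  have B_nonneg: "eventually (\<lambda>e. 0 \<le> B e) (at_right 0)"
    using small by eventually_elim (simp add: B_def g_nonneg)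
  have c: "(c \<longlongrightarrow> 1) (at_right 0)"
    unfolding c_def using \<open>0 < k\<close> by real_asymp
  have "Limsup (at_right 0) A = Limsup (at_right 0) (\<lambda>e. A (k * e))"
    by (rule Limsup_at_right_0_rescale[OF \<open>0 < k\<close>, symmetric])
  also have "\<dots> \<le> Limsup (at_right 0) (\<lambda>e. B e * ereal (c e))"
    using A_le_B by (rule Limsup_mono)
  also have "\<dots> \<le> Limsup (at_right 0) B"
    using B_nonneg c by (intro Limsup_mult_tendsto_1_le) simp_all
  finally have Limsup_eq: "Limsup (at_right 0) A = Limsup (at_right 0) B"
    using Limsup_mono[OF B_le_A] by (rule order_antisym)
  have "Liminf (at_right 0) A = Liminf (at_right 0) (\<lambda>e. A (k * e))"
    by (rule Liminf_at_right_0_rescale[OF \<open>0 < k\<close>, symmetric])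
  also have "\<dots> \<le> Liminf (at_right 0) (\<lambda>e. B e * ereal (c e))"
    using A_le_B by (rule Liminf_mono)
  also have "\<dots> \<le> Liminf (at_right 0) B"
    using B_nonneg c by (intro Liminf_mult_tendsto_1_le) simp_all
  finally have Liminf_eq: "Liminf (at_right 0) A = Liminf (at_right 0) B"
    using Liminf_mono[OF B_le_A] by (rule order_antisym)
  show ?thesis using Limsup_eq Liminf_eq unfolding A_def B_def by blast
qed

lemma ln_of_nat_nonneg: "0 \<le> ln (real n)"
  by (cases n) auto

(* No positivity hypothesis is needed since ln 0 = 0; this matters because span_num is 0 for X = {}. *)
lemma ln_le_mult_ln_if_le_power:
  fixes a b n :: nat
  assumes "a \<le> b ^ n"
  shows "ln (real a) \<le> real n * ln (real b)"
proof (cases "a = 0 \<or> n = 0")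
  case True
  then show ?thesis using assms ln_of_nat_nonneg[of b] by (cases a) auto
next
  case False
  then have "0 < b" using assms by (cases b) (auto simp: zero_power)
  have "ln (real a) \<le> ln (real b ^ n)" using False assms \<open>0 < b\<close> by (simp flip: of_nat_power)
  also have "\<dots> = real n * ln (real b)" using \<open>0 < b\<close> by (simp add: ln_realpow)
  finally show ?thesis .
qed

lemma Inf_card_attained:
  assumes "S \<noteq> {}"
  obtains A where "A \<in> S" "card A = Inf (card ` S)"
proof -
  have "Inf (card ` S) \<in> card ` S" using assms by (intro Inf_nat_def1) auto
  then show thesis using that by auto
qed

definition spanning_sets :: "'a::metric_space set \<Rightarrow> ('a \<Rightarrow> real \<Rightarrow> 'a) \<Rightarrow> real \<Rightarrow> real \<Rightarrow> 'a set set" where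
  "spanning_sets X phi t e = {E. finite E \<and> E \<subseteq> X \<and> (\<forall>x\<in>X. \<exists>y\<in>E. bowen_dist phi t x y < e)}"

lemma span_num_eq_Inf: "span_num X phi t e = Inf (card ` spanning_sets X phi t e)"
  unfolding span_num_def spanning_sets_def by (rule arg_cong[where f = Inf]) blast

lemma span_num_le_card: "E \<in> spanning_sets X phi t e \<Longrightarrow> span_num X phi t e \<le> card E"
  unfolding span_num_eq_Inf by (rule cInf_lower) auto

definition bowen_covers :: "'a::metric_space set \<Rightarrow> ('a \<Rightarrow> real \<Rightarrow> 'a) \<Rightarrow> real \<Rightarrow> real \<Rightarrow> 'a set set set" where
  "bowen_covers X phi t e =
     {C. finite C \<and> \<Union>C = X \<and> (\<forall>A\<in>C. \<forall>x\<in>A. \<forall>y\<in>A. bowen_dist phi t x y \<le> e)}"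

definition cover_num :: "'a::metric_space set \<Rightarrow> ('a \<Rightarrow> real \<Rightarrow> 'a) \<Rightarrow> real \<Rightarrow> real \<Rightarrow> nat" where
  "cover_num X phi t e = Inf (card ` bowen_covers X phi t e)"

lemma bowen_coversD:
  assumes "C \<in> bowen_covers X phi t e"
  shows "finite C" and "\<Union>C = X" and "\<And>A x y. A \<in> C \<Longrightarrow> x \<in> A \<Longrightarrow> y \<in> A \<Longrightarrow> bowen_dist phi t x y \<le> e"
  using assms unfolding bowen_covers_def by auto

lemma cover_num_le_card: "C \<in> bowen_covers X phi t e \<Longrightarrow> cover_num X phi t e \<le> card C"
  unfolding cover_num_def by (rule cInf_lower) auto

definition lower_span_rate :: "'a::metric_space set \<Rightarrow> ('a \<Rightarrow> real \<Rightarrow> 'a) \<Rightarrow> real \<Rightarrow> ereal" where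
  "lower_span_rate X phi e = Liminf at_top (\<lambda>t. ereal (ln (real (span_num X phi t e)) / t))"

lemma lower_span_rate_nonneg: "0 \<le> lower_span_rate X phi e"
  unfolding lower_span_rate_def
  by (intro Liminf_bounded eventually_mono[OF eventually_gt_at_top[of 0]]) (simp add: ln_of_nat_nonneg)

lemma lower_span_rate_le_span_rate: "lower_span_rate X phi e \<le> span_rate X phi e"
  unfolding lower_span_rate_def span_rate_def by (intro Liminf_le_Limsup) simp

lemma Liminf_span_num_div_eq:
  assumes "0 < L"
  shows "Liminf at_top (\<lambda>t. ereal (ln (real (span_num X phi t e)) / (t * L))) =
         lower_span_rate X phi e / ereal L"
proof -
  have "Liminf at_top (\<lambda>t. ereal (ln (real (span_num X phi t e)) / t) * ereal (1 / L)) =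
        lower_span_rate X phi e * ereal (1 / L)"
    unfolding lower_span_rate_def using assms by (intro Liminf_ereal_mult_right) simp_all
  then show ?thesis using assms by (simp add: divide_ereal_def inverse_eq_divide)
qed

lemma bowen_dist_commute: "bowen_dist phi t x y = bowen_dist phi t y x"
  unfolding bowen_dist_def by (simp add: dist_commute)

locale compact_flow =
  fixes X :: "'a::metric_space set" and phi :: "'a \<Rightarrow> real \<Rightarrow> 'a"
  assumes compact: "compact X" and flow: "is_flow X phi"
begin

lemma flow_in: "x \<in> X \<Longrightarrow> phi x t \<in> X"
  using flow unfolding is_flow_def by blast

lemma flow_add: "x \<in> X \<Longrightarrow> phi x (t + s) = phi (phi x s) t"
  using flow unfolding is_flow_def by blast

lemma bowen_dist_le_iff:
  assumes "0 \<le> t" "x \<in> X" "y \<in> X"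
  shows "bowen_dist phi t x y \<le> e \<longleftrightarrow> (\<forall>s\<in>{0..t}. dist (phi x s) (phi y s) \<le> e)"
  unfolding bowen_dist_def
proof (rule cSUP_le_iff)
  show "{0..t} \<noteq> {}" using assms(1) by simp
  show "bdd_above ((\<lambda>s. dist (phi x s) (phi y s)) ` {0..t})"
    using compact_imp_bounded[OF compact] assms(2,3)
    by (intro bdd_aboveI[where M = "diameter X"]) (auto intro: diameter_bounded_bound flow_in)
qed

lemma dist_le_bowen_dist:
  assumes "s \<in> {0..t}" "x \<in> X" "y \<in> X"
  shows "dist (phi x s) (phi y s) \<le> bowen_dist phi t x y"
  using bowen_dist_le_iff[of t x y "bowen_dist phi t x y"] assms by auto

lemma bowen_dist_triangle:
  assumes "0 \<le> t" "x \<in> X" "y \<in> X" "z \<in> X"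
  shows "bowen_dist phi t x z \<le> bowen_dist phi t x y + bowen_dist phi t y z"
  unfolding bowen_dist_le_iff[OF assms(1,2,4)]
  using dist_triangle[of "phi x _" "phi z _" "phi y _"] dist_le_bowen_dist assms
  by (smt (verit))

lemma bowen_dist_mono:
  assumes "0 \<le> t" "t \<le> t'" "x \<in> X" "y \<in> X"
  shows "bowen_dist phi t x y \<le> bowen_dist phi t' x y"
  unfolding bowen_dist_le_iff[OF assms(1,3,4)] using assms by (auto intro: dist_le_bowen_dist)

lemma bowen_dist_add_le:
  assumes "0 \<le> t" "0 \<le> s" "x \<in> X" "y \<in> X"
  shows "bowen_dist phi (t + s) x y \<le> max (bowen_dist phi t x y) (bowen_dist phi s (phi x t) (phi y t))"
  unfolding bowen_dist_le_iff[OF add_nonneg_nonneg[OF assms(1,2)] assms(3,4)]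
proof
  fix u assume u: "u \<in> {0..t + s}"
  show "dist (phi x u) (phi y u) \<le> max (bowen_dist phi t x y) (bowen_dist phi s (phi x t) (phi y t))"
  proof (cases "u \<le> t")
    case True
    then have "dist (phi x u) (phi y u) \<le> bowen_dist phi t x y"
      using u assms by (intro dist_le_bowen_dist) auto
    then show ?thesis by simp
  next
    case False
    then have "dist (phi x u) (phi y u) = dist (phi (phi x t) (u - t)) (phi (phi y t) (u - t))"
      using flow_add[OF assms(3), of "u - t" t] flow_add[OF assms(4), of "u - t" t] by simp
    also have "\<dots> \<le> bowen_dist phi s (phi x t) (phi y t)"
      using False u assms by (intro dist_le_bowen_dist flow_in) auto
    finally show ?thesis by simp
  qed
qed

lemma bowen_dist_uniformly_small:
  assumes "0 < e" "0 \<le> t"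
  obtains d where "0 < d" "\<And>x y. x \<in> X \<Longrightarrow> y \<in> X \<Longrightarrow> dist x y < d \<Longrightarrow> bowen_dist phi t x y < e"
proof -
  have "uniformly_continuous_on (X \<times> {0..t}) (\<lambda>(x, s). phi x s)"
    using flow compact unfolding is_flow_def
    by (intro compact_uniformly_continuous) (auto intro: continuous_on_subset compact_Times)
  then obtain d where "0 < d" and d: "\<And>p q. p \<in> X \<times> {0..t} \<Longrightarrow> q \<in> X \<times> {0..t} \<Longrightarrow>
      dist q p < d \<Longrightarrow> dist ((\<lambda>(x, s). phi x s) q) ((\<lambda>(x, s). phi x s) p) < e / 2"
    unfolding uniformly_continuous_on_def using \<open>0 < e\<close> by (metis half_gt_zero)
  have "bowen_dist phi t x y < e" if "x \<in> X" "y \<in> X" "dist x y < d" for x y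
  proof -
    have "bowen_dist phi t x y \<le> e / 2"
      unfolding bowen_dist_le_iff[OF \<open>0 \<le> t\<close> that(1,2)]
      using d[of "(y, _)" "(x, _)"] that by (force simp: dist_Pair_Pair)
    then show ?thesis using \<open>0 < e\<close> by simp
  qed
  with \<open>0 < d\<close> show thesis by (rule that)
qed

lemma spanning_sets_nonempty:
  assumes "0 < e" "0 \<le> t"
  shows "spanning_sets X phi t e \<noteq> {}"
proof -
  obtain d where "0 < d" and d: "\<And>x y. x \<in> X \<Longrightarrow> y \<in> X \<Longrightarrow> dist x y < d \<Longrightarrow> bowen_dist phi t x y < e"
    using bowen_dist_uniformly_small[OF assms] by blast
  obtain E where E: "E \<subseteq> X" "finite E" "X \<subseteq> (\<Union>y\<in>E. ball y d)"
    using compactE_image[OF compact, of X "\<lambda>y. ball y d"] \<open>0 < d\<close> by force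
  have "E \<in> spanning_sets X phi t e"
    unfolding spanning_sets_def using E d by (fastforce simp: dist_commute)
  then show ?thesis by blast
qed

lemma span_num_attained:
  assumes "0 < e" "0 \<le> t"
  obtains E where "E \<in> spanning_sets X phi t e" "card E = span_num X phi t e"
  using Inf_card_attained[OF spanning_sets_nonempty[OF assms]] unfolding span_num_eq_Inf .

lemma bowen_cover_of_spanning_set:
  assumes "0 \<le> t" "E \<in> spanning_sets X phi t e"
  shows "(\<lambda>y. {x \<in> X. bowen_dist phi t x y < e}) ` E \<in> bowen_covers X phi t (2 * e)"
  unfolding bowen_covers_def
proof (intro CollectI conjI ballI)
  show "finite ((\<lambda>y. {x \<in> X. bowen_dist phi t x y < e}) ` E)"
    using assms(2) unfolding spanning_sets_def by simp
  show "\<Union>((\<lambda>y. {x \<in> X. bowen_dist phi t x y < e}) ` E) = X"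
    using assms(2) unfolding spanning_sets_def by auto
  fix A x z assume "A \<in> (\<lambda>y. {x \<in> X. bowen_dist phi t x y < e}) ` E" "x \<in> A" "z \<in> A"
  then obtain y where "y \<in> E" "x \<in> X" "z \<in> X" "bowen_dist phi t x y < e" "bowen_dist phi t z y < e"
    by auto
  moreover have "y \<in> X" using \<open>y \<in> E\<close> assms(2) unfolding spanning_sets_def by blast
  ultimately show "bowen_dist phi t x z \<le> 2 * e"
    using bowen_dist_triangle[OF assms(1), of x y z] bowen_dist_commute[of phi t y z] by simp
qed

lemma bowen_covers_nonempty:
  assumes "0 < e" "0 \<le> t"
  shows "bowen_covers X phi t e \<noteq> {}"
  using spanning_sets_nonempty[of "e / 2" t] bowen_cover_of_spanning_set[OF assms(2), of _ "e / 2"] assms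
  by auto

lemma cover_num_attained:
  assumes "0 < e" "0 \<le> t"
  obtains C where "C \<in> bowen_covers X phi t e" "card C = cover_num X phi t e"
  using Inf_card_attained[OF bowen_covers_nonempty[OF assms]] unfolding cover_num_def .

lemma cover_num_le_span_num:
  assumes "0 < e" "0 \<le> t"
  shows "cover_num X phi t (2 * e) \<le> span_num X phi t e"
proof -
  obtain E where E: "E \<in> spanning_sets X phi t e" "card E = span_num X phi t e"
    using span_num_attained[OF assms] .
  then have "finite E" unfolding spanning_sets_def by blast
  have "cover_num X phi t (2 * e) \<le> card ((\<lambda>y. {x \<in> X. bowen_dist phi t x y < e}) ` E)"
    by (rule cover_num_le_card[OF bowen_cover_of_spanning_set[OF assms(2) E(1)]])
  also have "\<dots> \<le> card E" using \<open>finite E\<close> by (rule card_image_le)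
  finally show ?thesis using E(2) by simp
qed

lemma span_num_le_cover_num:
  assumes "0 < e" "e < e'" "0 \<le> t"
  shows "span_num X phi t e' \<le> cover_num X phi t e"
proof -
  obtain C where C: "C \<in> bowen_covers X phi t e" "card C = cover_num X phi t e"
    using cover_num_attained[OF assms(1,3)] .
  have "finite C" using C(1) by (rule bowen_coversD)
  define E where "E = (\<lambda>A. SOME x. x \<in> A) ` (C - {{}})"
  have pick: "(SOME x. x \<in> A) \<in> A" if "A \<noteq> {}" for A :: "'a set"
    using that by (simp add: some_in_eq)
  have "E \<in> spanning_sets X phi t e'"
    unfolding spanning_sets_def
  proof (intro CollectI conjI ballI)
    show "finite E" unfolding E_def using \<open>finite C\<close> by simp
    show "E \<subseteq> X" unfolding E_def using C(1) pick unfolding bowen_covers_def by blast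
    fix x assume "x \<in> X"
    then obtain A where A: "A \<in> C" "x \<in> A" using C(1) unfolding bowen_covers_def by blast
    then have "bowen_dist phi t x (SOME x. x \<in> A) \<le> e"
      using C(1) pick[of A] unfolding bowen_covers_def by blast
    moreover have "(SOME x. x \<in> A) \<in> E" unfolding E_def using A by blast
    ultimately show "\<exists>y\<in>E. bowen_dist phi t x y < e'" using assms(2) by force
  qed
  then have "span_num X phi t e' \<le> card E" by (rule span_num_le_card)
  also have "\<dots> \<le> card (C - {{}})" unfolding E_def using \<open>finite C\<close> by (intro card_image_le) simp
  also have "\<dots> \<le> card C" using \<open>finite C\<close> by (intro card_mono) auto
  finally show ?thesis using C(2) by simp
qed

lemma cover_num_mono:
  assumes "0 < e" "0 \<le> t" "t \<le> t'"
  shows "cover_num X phi t e \<le> cover_num X phi t' e"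
proof -
  obtain C where C: "C \<in> bowen_covers X phi t' e" "card C = cover_num X phi t' e"
    using cover_num_attained[OF assms(1)] assms(2,3) by (metis order_trans)
  have "C \<in> bowen_covers X phi t e"
    unfolding bowen_covers_def
  proof (intro CollectI conjI ballI)
    show "finite C" "\<Union>C = X" using bowen_coversD(1,2)[OF C(1)] .
    fix A x y assume "A \<in> C" "x \<in> A" "y \<in> A"
    moreover from this have "x \<in> X" "y \<in> X" using bowen_coversD(2)[OF C(1)] by blast+
    ultimately show "bowen_dist phi t x y \<le> e"
      using bowen_dist_mono[OF assms(2,3)] bowen_coversD(3)[OF C(1)] by (meson order_trans)
  qed
  then show ?thesis using C(2) by (metis cover_num_le_card)
qed

lemma cover_num_add_le:
  assumes "0 < e" "0 \<le> t" "0 \<le> s"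
  shows "cover_num X phi (t + s) e \<le> cover_num X phi t e * cover_num X phi s e"
proof -
  obtain C where C: "C \<in> bowen_covers X phi t e" "card C = cover_num X phi t e"
    using cover_num_attained[OF assms(1,2)] .
  obtain D where D: "D \<in> bowen_covers X phi s e" "card D = cover_num X phi s e"
    using cover_num_attained[OF assms(1,3)] .
  define P where "P = (\<lambda>(A, B). {x \<in> A. phi x t \<in> B}) ` (C \<times> D)"
  have "P \<in> bowen_covers X phi (t + s) e"
    unfolding bowen_covers_def
  proof (intro CollectI conjI ballI)
    show "finite P" unfolding P_def using C(1) D(1) by (simp add: bowen_coversD)
    have P_cases: "\<exists>A\<in>C. \<exists>B\<in>D. Q = {x \<in> A. phi x t \<in> B}" if "Q \<in> P" for Q
      using that unfolding P_def by auto
    show "\<Union>P = X"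
    proof (intro equalityI subsetI)
      fix x assume "x \<in> \<Union>P"
      then show "x \<in> X" using P_cases bowen_coversD(2)[OF C(1)] by blast
    next
      fix x assume "x \<in> X"
      then obtain A B where "A \<in> C" "x \<in> A" "B \<in> D" "phi x t \<in> B"
        using bowen_coversD(2)[OF C(1)] bowen_coversD(2)[OF D(1)] flow_in by blast
      then show "x \<in> \<Union>P" unfolding P_def by blast
    qed
    fix Q x y assume "Q \<in> P" "x \<in> Q" "y \<in> Q"
    then obtain A B where "A \<in> C" "B \<in> D" "x \<in> A" "y \<in> A" "phi x t \<in> B" "phi y t \<in> B"
      using P_cases by blast
    then have "x \<in> X" "y \<in> X" "bowen_dist phi t x y \<le> e" "bowen_dist phi s (phi x t) (phi y t) \<le> e"
      using bowen_coversD(2)[OF C(1)] bowen_coversD(3)[OF C(1)] bowen_coversD(3)[OF D(1)]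
      by blast+
    then show "bowen_dist phi (t + s) x y \<le> e"
      using bowen_dist_add_le[OF assms(2,3), of x y] by simp
  qed
  then have "cover_num X phi (t + s) e \<le> card P" by (rule cover_num_le_card)
  also have "\<dots> \<le> card (C \<times> D)"
    unfolding P_def using C(1) D(1) by (intro card_image_le) (simp add: bowen_coversD)
  finally show ?thesis using C(2) D(2) by (simp add: card_cartesian_product)
qed

lemma cover_num_mult_le:
  assumes "0 < e" "0 \<le> T" "1 \<le> n"
  shows "cover_num X phi (real n * T) e \<le> cover_num X phi T e ^ n"
  using assms(3)
proof (induction n rule: dec_induct)
  case base
  then show ?case by simp
next
  case (step n)
  have "cover_num X phi (real (Suc n) * T) e = cover_num X phi (real n * T + T) e"
    by (simp add: algebra_simps)
  also have "\<dots> \<le> cover_num X phi (real n * T) e * cover_num X phi T e"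
    using assms by (intro cover_num_add_le) auto
  also have "\<dots> \<le> cover_num X phi T e ^ n * cover_num X phi T e"
    using step.IH by (rule mult_right_mono) simp
  finally show ?case by (simp add: mult.commute)
qed

lemma span_num_le_power:
  assumes "0 < e" "0 < T" "0 < t"
  shows "span_num X phi t e \<le> span_num X phi T (e / 4) ^ nat \<lceil>t / T\<rceil>"
proof -
  define n where "n = nat \<lceil>t / T\<rceil>"
  have "t / T \<le> real n" unfolding n_def by (rule real_nat_ceiling_ge)
  then have "t \<le> real n * T" using assms(2) by (simp add: field_simps)
  then have "1 \<le> n" using assms(2,3) by (cases n) auto
  have "span_num X phi t e \<le> cover_num X phi t (e / 2)"
    using assms by (intro span_num_le_cover_num) auto
  also have "\<dots> \<le> cover_num X phi (real n * T) (e / 2)"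
    using assms \<open>t \<le> real n * T\<close> by (intro cover_num_mono) auto
  also have "\<dots> \<le> cover_num X phi T (e / 2) ^ n"
    using assms \<open>1 \<le> n\<close> by (intro cover_num_mult_le) auto
  also have "\<dots> \<le> span_num X phi T (e / 4) ^ n"
    using cover_num_le_span_num[of "e / 4" T] assms by (intro power_mono) auto
  finally show ?thesis unfolding n_def .
qed

lemma ln_span_num_div_le:
  assumes "0 < e" "0 < T" "0 < t"
  shows "ln (real (span_num X phi t e)) / t \<le> ln (real (span_num X phi T (e / 4))) * (1 / T + 1 / t)"
proof -
  define K where "K = ln (real (span_num X phi T (e / 4)))"
  have "0 \<le> K" unfolding K_def by (rule ln_of_nat_nonneg)
  have "0 < t / T" using assms by simp
  have "ln (real (span_num X phi t e)) \<le> real (nat \<lceil>t / T\<rceil>) * K"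
    unfolding K_def by (rule ln_le_mult_ln_if_le_power[OF span_num_le_power[OF assms]])
  also have "\<dots> \<le> (t / T + 1) * K"
    using \<open>0 \<le> K\<close> \<open>0 < t / T\<close> by (intro mult_right_mono) linarith+
  finally show ?thesis unfolding K_def using assms by (simp add: field_simps)
qed

lemma span_rate_le_lower_span_rate:
  assumes "0 < e"
  shows "span_rate X phi e \<le> lower_span_rate X phi (e / 4)"
proof -
  have "span_rate X phi e \<le> ereal (ln (real (span_num X phi T (e / 4))) / T)" if "0 < T" for T
  proof -
    define K where "K = ln (real (span_num X phi T (e / 4)))"
    have "span_rate X phi e \<le> Limsup at_top (\<lambda>t. ereal (K * (1 / T + 1 / t)))"
      unfolding span_rate_def K_def
      by (intro Limsup_mono eventually_mono[OF eventually_gt_at_top[of 0]])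
        (simp add: ln_span_num_div_le assms that)
    also have "\<dots> = ereal (K / T)"
      by (intro lim_imp_Limsup) (simp_all add: lim_ereal, real_asymp)
    finally show ?thesis unfolding K_def .
  qed
  then show ?thesis
    unfolding lower_span_rate_def
    by (intro Liminf_bounded eventually_mono[OF eventually_gt_at_top[of 0]]) simp
qed

end

theorem proposition2p4:
  fixes X :: "'a::metric_space set" and phi :: "'a \<Rightarrow> real \<Rightarrow> 'a"
  assumes "compact X" and "is_flow X phi"
  shows "upper_mdim_M X phi =
           Limsup (at_right 0) (\<lambda>eps. Liminf at_top
              (\<lambda>t. ereal (ln (real (span_num X phi t eps)) / (t * ln (1 / eps))))) \<and>
         lower_mdim_M X phi =
           Liminf (at_right 0) (\<lambda>eps. Liminf at_top
              (\<lambda>t. ereal (ln (real (span_num X phi t eps)) / (t * ln (1 / eps)))))"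
proof -
  interpret compact_flow X phi using assms by unfold_locales
  have "eventually (\<lambda>e. 0 < e \<and> e < 1) (at_right (0::real))"
    unfolding eventually_at_right_field by (intro exI[of _ 1]) auto
  then have "eventually (\<lambda>e. Liminf at_top (\<lambda>t. ereal (ln (real (span_num X phi t e)) / (t * ln (1 / e)))) =
      lower_span_rate X phi e / ereal (ln (1 / e))) (at_right 0)"
    by eventually_elim (simp add: Liminf_span_num_div_eq)
  moreover have "Limsup (at_right 0) (\<lambda>e. span_rate X phi e / ereal (ln (1 / e))) =
      Limsup (at_right 0) (\<lambda>e. lower_span_rate X phi e / ereal (ln (1 / e))) \<and>
    Liminf (at_right 0) (\<lambda>e. span_rate X phi e / ereal (ln (1 / e))) =
      Liminf (at_right 0) (\<lambda>e. lower_span_rate X phi e / ereal (ln (1 / e)))"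
  proof (rule Limsup_Liminf_div_ln_eq_if_rescaled_le[where k = 4])
    show "span_rate X phi (4 * e) \<le> lower_span_rate X phi e" if "0 < e" for e
      using span_rate_le_lower_span_rate[of "4 * e"] that by simp
  qed (simp_all add: lower_span_rate_le_span_rate lower_span_rate_nonneg)
  ultimately show ?thesis
    unfolding upper_mdim_M_def lower_mdim_M_def by (simp add: Limsup_eq Liminf_eq)
qed

end
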